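(* Let $T$ be a triangulation of an unpunctured bordered surface $(S,M)$. There are vertices $i,k$ of $Q_{\overline T}$ with a path $k\to i\to\tilde k$ if and only if $T$ contains (a triangulated) Möbius strip $M_2$ with two marked points, with $i$ being the non-t-mutable arc of this $M_2$ (the arc of $T$ inside $M_2$ whose flip is a one-sided closed curve).
   Context: Bordered surface: compact surface $S$ (possibly non-orientable) with nonempty boundary and a finite set $M$ of marked points on $\partial S$, at least one per boundary component; unpunctured: no interior marked points; monogon, digon, triangle excluded. Quasi-arcs: arcs (up to isotopy) not bounding a Möbius strip with one marked point, and one-sided simple closed curves; compatible = non-intersecting, or the unique arc and the unique one-sided curve inside some Möbius strip with one marked point. A quasi-triangulation is a maximal compatible set; a triangulation is one with no one-sided closed curve; an arc is t-mutable if its flip is again an arc. Orientable double cover $\overline{(S,M)}$: replace each cross-cap by a cylinder to get $\tilde S$, take two copies and glue corresponding new cylinder boundaries by the antipodal map (two oppositely oriented copies if $S$ is orientable). $T$ lifts to a triangulation $\overline T$; each arc/boundary segment $i$ has lifts $i,\tilde i$ ($\tilde{\tilde i}=i$). Adjacency quiver $Q_{\overline T}$: vertices are the arcs of $\overline T$ (and boundary segments receiving variables); for every triangle and sides $i,j$ with $j$ following $i$ in the orientation an arrow $i\to j$; 2-cycles cancelled. *)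

theory Defs
  imports Main
begin

text \<open>Combinatorial model of a triangulation T of an unpunctured bordered surface (S,M).
  Triangles are elements of a finite set Tr; every triangle d carries a local orientation,
  its sides are (d,0),(d,1),(d,2) in this cyclic order, side (d,n) running from corner n to
  corner n+1 (mod 3).  The involution g glues sides: an arc of T is an orbit {s, g s} with
  g s ~= s, a boundary segment is a fixed point of g.  tw s says whether the gluing along
  the arc of s reverses the local orientations (twisted gluing), i.e. whether the two
  oriented triangles do NOT induce opposite orientations on the common edge.\<close>

definition sides :: "'t set \<Rightarrow> ('t \<times> nat) set" where
  "sides Tr = {(d, n). d \<in> Tr \<and> n < 3}"

text \<open>Identification of corners (corner (d,c) = start point of side (d,c)) induced by gluing.\<close>
definition corner_rel ::
  "'t set \<Rightarrow> ('t \<times> nat \<Rightarrow> 't \<times> nat) \<Rightarrow> ('t \<times> nat \<Rightarrow> bool) \<Rightarrow> 't \<times> nat \<Rightarrow> 't \<times> nat \<Rightarrow> bool" where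
  "corner_rel Tr g tw c c' \<longleftrightarrow>
     (\<exists>d n d' n'. (d, n) \<in> sides Tr \<and> g (d, n) = (d', n') \<and> (d', n') \<noteq> (d, n) \<and>
        (if tw (d, n)
         then (c = (d, n) \<and> c' = (d', n')) \<or> (c = (d, Suc n mod 3) \<and> c' = (d', Suc n' mod 3))
         else (c = (d, n) \<and> c' = (d', Suc n' mod 3)) \<or> (c = (d, Suc n mod 3) \<and> c' = (d', n'))))"

definition same_vertex ::
  "'t set \<Rightarrow> ('t \<times> nat \<Rightarrow> 't \<times> nat) \<Rightarrow> ('t \<times> nat \<Rightarrow> bool) \<Rightarrow> 't \<times> nat \<Rightarrow> 't \<times> nat \<Rightarrow> bool" where
  "same_vertex Tr g tw = (\<lambda>x y. corner_rel Tr g tw x y \<or> corner_rel Tr g tw y x)\<^sup>*\<^sup>*"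

definition boundary_corner :: "('t \<times> nat \<Rightarrow> 't \<times> nat) \<Rightarrow> 't \<times> nat \<Rightarrow> bool" where
  "boundary_corner g c \<longleftrightarrow>
     (g c = c \<or> g (fst c, (snd c + 2) mod 3) = (fst c, (snd c + 2) mod 3))"

definition tri_adj :: "('t \<times> nat \<Rightarrow> 't \<times> nat) \<Rightarrow> 't \<Rightarrow> 't \<Rightarrow> bool" where
  "tri_adj g d d' \<longleftrightarrow> (\<exists>n n'. n < 3 \<and> g (d, n) = (d', n'))"

text \<open>(Tr,g,tw) is a triangulation of an unpunctured bordered surface (connected, every
  marked point on the boundary, no arc bounding a Moebius strip with one marked point --
  combinatorially: no triangle has two of its sides glued by a twist -- and (S,M) not the
  triangle, i.e. at least one arc).\<close>
definition unpunctured_triangulation ::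
  "'t set \<Rightarrow> ('t \<times> nat \<Rightarrow> 't \<times> nat) \<Rightarrow> ('t \<times> nat \<Rightarrow> bool) \<Rightarrow> bool" where
  "unpunctured_triangulation Tr g tw \<longleftrightarrow>
     finite Tr \<and> Tr \<noteq> {} \<and>
     (\<forall>s \<in> sides Tr. g s \<in> sides Tr \<and> g (g s) = s \<and> tw (g s) = tw s) \<and>
     (\<forall>d n m. (d, n) \<in> sides Tr \<and> g (d, n) = (d, m) \<and> m \<noteq> n \<longrightarrow> \<not> tw (d, n)) \<and>
     (\<forall>d \<in> Tr. \<forall>d' \<in> Tr. (tri_adj g)\<^sup>*\<^sup>* d d') \<and>
     (\<forall>c \<in> sides Tr. \<exists>c' \<in> sides Tr. boundary_corner g c' \<and> same_vertex Tr g tw c c') \<and>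
     (\<exists>s \<in> sides Tr. g s \<noteq> s)"

text \<open>Lifted sides ((d,n),b): copy b of triangle d; copy True carries the reversed
  orientation.  The lift of the edge through side s in copy b.\<close>
definition ledge ::
  "('t \<times> nat \<Rightarrow> 't \<times> nat) \<Rightarrow> ('t \<times> nat \<Rightarrow> bool) \<Rightarrow> ('t \<times> nat) \<times> bool \<Rightarrow> (('t \<times> nat) \<times> bool) set" where
  "ledge g tw x = (if g (fst x) = fst x then {x}
                   else {x, (g (fst x), snd x \<noteq> tw (fst x))})"

text \<open>Vertices of the quiver: all arcs and boundary segments of the lifted triangulation.\<close>
definition qvertices ::
  "'t set \<Rightarrow> ('t \<times> nat \<Rightarrow> 't \<times> nat) \<Rightarrow> ('t \<times> nat \<Rightarrow> bool) \<Rightarrow> (('t \<times> nat) \<times> bool) set set" where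
  "qvertices Tr g tw = {ledge g tw (s, b) | s b. s \<in> sides Tr}"

definition tilde :: "(('t \<times> nat) \<times> bool) set \<Rightarrow> (('t \<times> nat) \<times> bool) set" where
  "tilde E = (\<lambda>(s, b). (s, \<not> b)) ` E"

definition lnext :: "('t \<times> nat) \<times> bool \<Rightarrow> ('t \<times> nat) \<times> bool" where
  "lnext x = ((fst (fst x), if snd x then (snd (fst x) + 2) mod 3 else (snd (fst x) + 1) mod 3), snd x)"

definition raw_arrows ::
  "'t set \<Rightarrow> ('t \<times> nat \<Rightarrow> 't \<times> nat) \<Rightarrow> ('t \<times> nat \<Rightarrow> bool) \<Rightarrow>
   (('t \<times> nat) \<times> bool) set \<Rightarrow> (('t \<times> nat) \<times> bool) set \<Rightarrow> nat" where
  "raw_arrows Tr g tw X Y =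
     card {x. fst x \<in> sides Tr \<and> ledge g tw x = X \<and> ledge g tw (lnext x) = Y}"

text \<open>Number of arrows X \<rightarrow> Y in Q_{T bar}, after cancelling 2-cycles.\<close>
definition qarrows ::
  "'t set \<Rightarrow> ('t \<times> nat \<Rightarrow> 't \<times> nat) \<Rightarrow> ('t \<times> nat \<Rightarrow> bool) \<Rightarrow>
   (('t \<times> nat) \<times> bool) set \<Rightarrow> (('t \<times> nat) \<times> bool) set \<Rightarrow> nat" where
  "qarrows Tr g tw X Y = raw_arrows Tr g tw X Y - raw_arrows Tr g tw Y X"

text \<open>The side s = (d1,n) lies on the non-t-mutable arc of a triangulated Moebius strip M_2
  contained in T: two distinct triangles d1, d2 glued along two pairs of sides, exactly one
  of the two gluings twisted (so the union is a Moebius strip with two marked points); the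
  non-t-mutable arc is the twisted one if the two shared arcs occur in the same cyclic order
  in both triangles, and the untwisted one otherwise (equivalently: the arc of the M_2
  joining its two distinct marked points).\<close>
definition M2_nonmutable_side ::
  "'t set \<Rightarrow> ('t \<times> nat \<Rightarrow> 't \<times> nat) \<Rightarrow> ('t \<times> nat \<Rightarrow> bool) \<Rightarrow> 't \<times> nat \<Rightarrow> bool" where
  "M2_nonmutable_side Tr g tw s \<longleftrightarrow>
     (\<exists>d1 d2 n m p q. s = (d1, n) \<and> d1 \<in> Tr \<and> d2 \<in> Tr \<and> d1 \<noteq> d2 \<and>
        n < 3 \<and> m < 3 \<and> n \<noteq> m \<and>
        g (d1, n) = (d2, p) \<and> g (d1, m) = (d2, q) \<and>
        tw (d1, n) \<noteq> tw (d1, m) \<and>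
        tw (d1, n) = ((m = Suc n mod 3) = (q = Suc p mod 3)))"

end

theory Submission
  imports Defs
begin

text \<open>An arrow of the quiver comes from a lifted triangle in which its target follows its
  source.  Given k \<rightarrow> i \<rightarrow> tilde k, the arrow k \<rightarrow> i lives in a lift of a triangle d,
  and i \<rightarrow> tilde k in a lift of a triangle d2 glued to d along the arc of i.  Since k and
  tilde k are the two lifts of one arc, d2 also contains the arc of k, now seen from the
  opposite copy; bookkeeping of copies shows that exactly one of the two gluings of d and
  d2 is twisted, and the absence of self-folded twisted triangles forces d \<noteq> d2.  So d and
  d2 form a Moebius strip with two marked points, and the cyclic order of the shared arcs
  identifies i as its non-t-mutable arc.  Conversely, in such a strip the two arrows exist,
  and no arrow in the opposite direction cancels them.\<close>

definition next_side :: "nat \<Rightarrow> bool \<Rightarrow> nat" where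
  "next_side a b = (if b then (a + 2) mod 3 else (a + 1) mod 3)"

lemma lnext_eq [simp]: "lnext ((d, a), b) = ((d, next_side a b), b)"
  by (simp add: lnext_def next_side_def)

lemma next_side_less: "next_side a b < 3"
  by (simp add: next_side_def)

lemma next_side_neq: "a < 3 \<Longrightarrow> next_side a b \<noteq> a"
  unfolding next_side_def by (cases b; presburger)

lemma next_side_next_side_neq: "a < 3 \<Longrightarrow> next_side (next_side a b) b \<noteq> a"
  unfolding next_side_def by (cases b; presburger)

lemma less_3_cases: "(a :: nat) < 3 \<Longrightarrow> a = 0 \<or> a = 1 \<or> a = 2"
  by auto

lemma next_side_eq_iff:
  "a < 3 \<Longrightarrow> n < 3 \<Longrightarrow> a \<noteq> n \<Longrightarrow> next_side a b = n \<longleftrightarrow> b = (a = Suc n mod 3)"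
  by (cases b; elim less_3_cases[THEN disjE] disjE; simp add: next_side_def)

lemma next_side_eq_Suc_mod_3_iff: "a < 3 \<Longrightarrow> next_side a b = Suc a mod 3 \<longleftrightarrow> \<not> b"
  by (cases b; elim less_3_cases[THEN disjE] disjE; simp add: next_side_def)

lemma Suc_mod_3_flip:
  "a < 3 \<Longrightarrow> n < 3 \<Longrightarrow> a \<noteq> n \<Longrightarrow> a = Suc n mod 3 \<longleftrightarrow> n \<noteq> Suc a mod 3"
  by (elim less_3_cases[THEN disjE] disjE) simp_all

lemma mem_ledge: "z \<in> ledge g tw (s, b) \<longleftrightarrow> z = (s, b) \<or> (g s \<noteq> s \<and> z = (g s, b \<noteq> tw s))"
  by (auto simp: ledge_def)

lemma in_ledge: "x \<in> ledge g tw x"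
  by (simp add: ledge_def)

lemma ledge_arc: "g s \<noteq> s \<Longrightarrow> ledge g tw (s, b) = {(s, b), (g s, b \<noteq> tw s)}"
  by (simp add: ledge_def)

lemma tilde_ledge: "tilde (ledge g tw (s, b)) = ledge g tw (s, \<not> b)"
  by (auto simp: tilde_def ledge_def)

lemma ledge_glued:
  assumes "g s \<noteq> s" "g (g s) = s" "tw (g s) = tw s"
  shows "ledge g tw (g s, b \<noteq> tw s) = ledge g tw (s, b)"
  using assms by (auto simp: ledge_def)

lemma raw_arrows_pos_iff:
  "raw_arrows Tr g tw X Y > 0 \<longleftrightarrow>
     (\<exists>x. fst x \<in> sides Tr \<and> ledge g tw x = X \<and> ledge g tw (lnext x) = Y)"
proof -
  let ?A = "{x. fst x \<in> sides Tr \<and> ledge g tw x = X \<and> ledge g tw (lnext x) = Y}"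
  have "finite ?A"
  proof (cases "?A = {}")
    case False
    then obtain x where "ledge g tw x = X"
      by blast
    then have "finite X"
      by (auto simp: ledge_def)
    moreover have "?A \<subseteq> X"
      using in_ledge by blast
    ultimately show ?thesis
      by (rule finite_subset[rotated])
  qed (metis finite.emptyI)
  then show ?thesis
    unfolding raw_arrows_def card_gt_0_iff ex_in_conv[symmetric] mem_Collect_eq by simp
qed

lemma raw_arrows_posI:
  "fst x \<in> sides Tr \<Longrightarrow> ledge g tw x = X \<Longrightarrow> ledge g tw (lnext x) = Y \<Longrightarrow>
   raw_arrows Tr g tw X Y > 0"
  by (rule raw_arrows_pos_iff[THEN iffD2]) blast

lemma raw_arrows_eq_0I:
  assumes "\<And>x. x \<in> X \<Longrightarrow> lnext x \<in> Y \<Longrightarrow> False"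
  shows "raw_arrows Tr g tw X Y = 0"
proof -
  have "{x. fst x \<in> sides Tr \<and> ledge g tw x = X \<and> ledge g tw (lnext x) = Y} = {}"
    using assms in_ledge by blast
  then show ?thesis
    unfolding raw_arrows_def by (simp only: card.empty)
qed

lemma unpunctured_triangulation_glue:
  assumes "unpunctured_triangulation Tr g tw" "s \<in> sides Tr"
  shows "g s \<in> sides Tr" "g (g s) = s" "tw (g s) = tw s"
  using assms by (auto simp: unpunctured_triangulation_def)

lemma unpunctured_triangulation_untwisted_fold:
  assumes "unpunctured_triangulation Tr g tw" "(d, n) \<in> sides Tr" "g (d, n) = (d, m)" "m \<noteq> n"
  shows "\<not> tw (d, n)"
  using assms by (auto simp: unpunctured_triangulation_def)

text \<open>Two sides of one triangle never share a lift in opposite copies: that would need a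
  twisted gluing of two sides of a triangle, i.e. a Moebius strip with one marked point.\<close>
lemma ledge_same_triangle_same_copy:
  assumes T: "unpunctured_triangulation Tr g tw" and a: "(d, a) \<in> sides Tr"
    and mem: "((d, c), b') \<in> ledge g tw ((d, a), b)"
  shows "b' = b"
  using mem unpunctured_triangulation_untwisted_fold[OF T a, of c]
  by (cases "c = a") (auto simp: mem_ledge)

lemma path_in_quiver_imp_M2:
  assumes T: "unpunctured_triangulation Tr g tw"
    and ki: "raw_arrows Tr g tw k i > 0" and ik: "raw_arrows Tr g tw i (tilde k) > 0"
  shows "\<exists>s b. M2_nonmutable_side Tr g tw s \<and> i = ledge g tw (s, b)"
proof -
  obtain x where x: "fst x \<in> sides Tr" "ledge g tw x = k" "ledge g tw (lnext x) = i"
    using raw_arrows_pos_iff[THEN iffD1, OF ki] by blast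
  obtain d a b where "x = ((d, a), b)"
    by (metis prod.collapse)
  with x have y: "(d, a) \<in> sides Tr" "ledge g tw ((d, a), b) = k"
      "ledge g tw ((d, next_side a b), b) = i"
    by simp_all
  obtain z where "ledge g tw z = i" "ledge g tw (lnext z) = tilde k"
    using raw_arrows_pos_iff[THEN iffD1, OF ik] by blast
  then have z: "z \<in> i" "lnext z \<in> ledge g tw ((d, a), \<not> b)"
    using in_ledge y(2) tilde_ledge by metis+
  define c where "c = next_side a b"
  have a3: "a < 3" and d: "d \<in> Tr" and c: "(d, c) \<in> sides Tr" "c \<noteq> a"
    using y(1) next_side_less next_side_neq by (auto simp: sides_def c_def)
  have "z \<noteq> ((d, c), b)"
  proof
    assume "z = ((d, c), b)"
    then have "((d, next_side c b), b) \<in> ledge g tw ((d, a), \<not> b)"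
      using z(2) by simp
    then show False
      using ledge_same_triangle_same_copy[OF T y(1)] by blast
  qed
  then have gc: "g (d, c) \<noteq> (d, c)" and z_eq: "z = (g (d, c), b \<noteq> tw (d, c))"
    using z(1) y(3) by (auto simp: mem_ledge c_def)
  obtain d2 p where dp: "g (d, c) = (d2, p)"
    by (metis surj_pair)
  have p: "d2 \<in> Tr" "p < 3"
    using unpunctured_triangulation_glue(1)[OF T c(1)] dp by (auto simp: sides_def)
  define e where "e = (b \<noteq> tw (d, c))"
  have lz: "lnext z = ((d2, next_side p e), e)"
    using z_eq dp e_def by simp
  have dd: "d2 \<noteq> d"
  proof
    assume "d2 = d"
    then have "((d, next_side p e), e) \<in> ledge g tw ((d, a), \<not> b)"
      using z(2) lz by simp
    then have "e = (\<not> b)"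
      by (rule ledge_same_triangle_same_copy[OF T y(1)])
    moreover have "\<not> tw (d, c)"
      using unpunctured_triangulation_untwisted_fold[OF T c(1)] dp gc \<open>d2 = d\<close> by auto
    ultimately show False
      using e_def by simp
  qed
  then have ga: "g (d, a) = (d2, next_side p e)" and e: "e = (\<not> b \<noteq> tw (d, a))"
    using z(2) lz by (auto simp: mem_ledge)
  have twisted: "tw (d, c) \<noteq> tw (d, a)"
    using e e_def by auto
  have "next_side a b = c \<longleftrightarrow> b = (a = Suc c mod 3)"
    by (rule next_side_eq_iff) (use a3 c in \<open>simp_all add: c_def next_side_less\<close>)
  then have "a = Suc c mod 3 \<longleftrightarrow> b"
    by (simp add: c_def)
  moreover have "next_side p e = Suc p mod 3 \<longleftrightarrow> \<not> e"
    using next_side_eq_Suc_mod_3_iff p(2) by blast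
  ultimately have "tw (d, c) = ((a = Suc c mod 3) = (next_side p e = Suc p mod 3))"
    using e_def by (cases b; cases "tw (d, c)") simp_all
  moreover have "c < 3"
    using c(1) by (simp add: sides_def)
  ultimately have "M2_nonmutable_side Tr g tw (d, c)"
    unfolding M2_nonmutable_side_def using d p dd c(2) a3 dp ga twisted by blast
  then show ?thesis
    using y(3) c_def by blast
qed

text \<open>b is the copy of d1 in which side n follows side m.\<close>
lemma M2_oriented_path_in_quiver:
  assumes T: "unpunctured_triangulation Tr g tw"
    and d: "d1 \<in> Tr" "d2 \<in> Tr" "d1 \<noteq> d2" "n < 3" "m < 3" "n \<noteq> m"
    and gn: "g (d1, n) = (d2, p)" and gm: "g (d1, m) = (d2, q)"
    and twisted: "tw (d1, n) \<noteq> tw (d1, m)"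
    and cyc: "tw (d1, n) = ((m = Suc n mod 3) = (q = Suc p mod 3))"
  defines "b \<equiv> (m = Suc n mod 3)"
  shows "\<exists>k \<in> qvertices Tr g tw.
           qarrows Tr g tw k (ledge g tw ((d1, n), b)) > 0 \<and>
           qarrows Tr g tw (ledge g tw ((d1, n), b)) (tilde k) > 0"
proof -
  have sn: "(d1, n) \<in> sides Tr" and sm: "(d1, m) \<in> sides Tr"
    using d by (auto simp: sides_def)
  note glue_n = unpunctured_triangulation_glue[OF T sn] and glue_m = unpunctured_triangulation_glue[OF T sm]
  have p3: "p < 3" and q3: "q < 3" and pq: "p \<noteq> q"
    using glue_n glue_m gn gm d(6) by (auto simp: sides_def)
  define c where "c = (b \<noteq> tw (d1, n))"
  have next_m: "next_side m b = n"
    using next_side_eq_iff[of m n b] d b_def by auto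
  have next_p: "next_side p c = q"
    using next_side_eq_iff[of p q c] Suc_mod_3_flip[of p q] p3 q3 pq cyc
    by (auto simp: b_def c_def)
  define i where "i = ledge g tw ((d1, n), b)"
  define k where "k = ledge g tw ((d1, m), b)"
  have c_m: "c = (b = tw (d1, m))"
    using twisted unfolding c_def by (cases "tw (d1, n)") auto
  have i_eq: "i = {((d1, n), b), ((d2, p), c)}"
    using ledge_arc[of g "(d1, n)" tw b] gn d(3) by (simp add: i_def c_def)
  have k_eq: "k = {((d1, m), b), ((d2, q), \<not> c)}"
    using ledge_arc[of g "(d1, m)" tw b] gm d(3) c_m by (simp add: k_def)
  have tk_eq: "tilde k = {((d1, m), \<not> b), ((d2, q), c)}"
    using ledge_arc[of g "(d1, m)" tw "\<not> b"] gm d(3) c_m by (simp add: k_def tilde_ledge)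
  have "raw_arrows Tr g tw k i > 0"
    using sm next_m by (intro raw_arrows_posI[of "((d1, m), b)"]) (simp_all add: k_def i_def)
  moreover have "raw_arrows Tr g tw i k = 0"
    using d next_side_next_side_neq[of m b] next_m
    by (intro raw_arrows_eq_0I) (auto simp: i_eq k_eq)
  moreover have "raw_arrows Tr g tw i (tilde k) > 0"
  proof (rule raw_arrows_posI[of "((d2, p), c)"])
    show "fst ((d2, p), c) \<in> sides Tr"
      using glue_n gn by simp
    show "ledge g tw ((d2, p), c) = i"
      using ledge_glued[of g "(d1, n)" tw b] glue_n gn d(3) by (simp add: i_def c_def)
    show "ledge g tw (lnext ((d2, p), c)) = tilde k"
      using ledge_glued[of g "(d1, m)" tw "\<not> b"] glue_m gm d(3) next_p c_m
      by (simp add: k_def tilde_ledge)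
  qed
  moreover have "raw_arrows Tr g tw (tilde k) i = 0"
    using d next_side_next_side_neq[of p c] next_p p3
    by (intro raw_arrows_eq_0I) (auto simp: i_eq tk_eq)
  moreover have "k \<in> qvertices Tr g tw"
    unfolding k_def qvertices_def using sm by blast
  ultimately show ?thesis
    unfolding i_def[symmetric] qarrows_def by (intro bexI[of _ k]) auto
qed

text \<open>Seen from d2 the strip has the same shape, so the previous lemma, applied at d1 or at
  d2, covers both lifts of s.\<close>
lemma M2_nonmutable_side_path_in_quiver:
  assumes T: "unpunctured_triangulation Tr g tw" and s: "M2_nonmutable_side Tr g tw s"
  shows "\<exists>k \<in> qvertices Tr g tw.
           qarrows Tr g tw k (ledge g tw (s, b)) > 0 \<and>
           qarrows Tr g tw (ledge g tw (s, b)) (tilde k) > 0"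
proof -
  obtain d1 d2 n m p q where s_eq: "s = (d1, n)" and
    d: "d1 \<in> Tr" "d2 \<in> Tr" "d1 \<noteq> d2" "n < 3" "m < 3" "n \<noteq> m"
    and gn: "g (d1, n) = (d2, p)" and gm: "g (d1, m) = (d2, q)"
    and twisted: "tw (d1, n) \<noteq> tw (d1, m)"
    and cyc: "tw (d1, n) = ((m = Suc n mod 3) = (q = Suc p mod 3))"
    using s unfolding M2_nonmutable_side_def by blast
  show ?thesis
  proof (cases "b = (m = Suc n mod 3)")
    case True
    then show ?thesis
      using M2_oriented_path_in_quiver[OF T d gn gm twisted cyc] s_eq by simp
  next
    case False
    have sn: "(d1, n) \<in> sides Tr" and sm: "(d1, m) \<in> sides Tr"
      using d by (auto simp: sides_def)
    note glue_n = unpunctured_triangulation_glue[OF T sn] and glue_m = unpunctured_triangulation_glue[OF T sm]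
    have d': "d2 \<in> Tr" "d1 \<in> Tr" "d2 \<noteq> d1" "p < 3" "q < 3" "p \<noteq> q"
      using glue_n glue_m gn gm d by (auto simp: sides_def)
    have gp: "g (d2, p) = (d1, n)" and gq: "g (d2, q) = (d1, m)"
      using glue_n glue_m gn gm by simp_all
    have twisted': "tw (d2, p) \<noteq> tw (d2, q)"
      using glue_n glue_m gn gm twisted by simp
    have cyc': "tw (d2, p) = ((q = Suc p mod 3) = (m = Suc n mod 3))"
      using glue_n gn cyc by auto
    have "(b \<noteq> tw (d1, n)) = (q = Suc p mod 3)"
      using False cyc by (cases b; cases "tw (d1, n)") auto
    then have "ledge g tw (s, b) = ledge g tw ((d2, p), q = Suc p mod 3)"
      using ledge_glued[of g "(d1, n)" tw b] glue_n gn d(3) s_eq by simp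
    then show ?thesis
      using M2_oriented_path_in_quiver[OF T d' gp gq twisted' cyc'] by simp
  qed
qed

theorem lemma4p9:
  fixes Tr :: "'t set" and g :: "'t \<times> nat \<Rightarrow> 't \<times> nat" and tw :: "'t \<times> nat \<Rightarrow> bool"
  assumes "unpunctured_triangulation Tr g tw"
    and "i \<in> qvertices Tr g tw"
  shows "(\<exists>k \<in> qvertices Tr g tw.
            qarrows Tr g tw k i > 0 \<and> qarrows Tr g tw i (tilde k) > 0)
         \<longleftrightarrow> (\<exists>s b. M2_nonmutable_side Tr g tw s \<and> i = ledge g tw (s, b))"
proof
  assume "\<exists>k \<in> qvertices Tr g tw. qarrows Tr g tw k i > 0 \<and> qarrows Tr g tw i (tilde k) > 0"
  then obtain k where "qarrows Tr g tw k i > 0" "qarrows Tr g tw i (tilde k) > 0"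
    by blast
  then have "raw_arrows Tr g tw k i > 0" "raw_arrows Tr g tw i (tilde k) > 0"
    unfolding qarrows_def by simp_all
  then show "\<exists>s b. M2_nonmutable_side Tr g tw s \<and> i = ledge g tw (s, b)"
    using path_in_quiver_imp_M2 assms(1) by blast
next
  assume "\<exists>s b. M2_nonmutable_side Tr g tw s \<and> i = ledge g tw (s, b)"
  then show "\<exists>k \<in> qvertices Tr g tw. qarrows Tr g tw k i > 0 \<and> qarrows Tr g tw i (tilde k) > 0"
    using M2_nonmutable_side_path_in_quiver assms(1) by blast
qed

end
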